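(* Let $n \geq 2$, $N = \frac{n(n+1)}{2}$, fix $1 \leq i < j \leq k < n$, and put $x = \lambda_{k,i}$, $y = \lambda_{k,j}$. Let $\mathcal{A}$, $V_{\mathcal{A}}$ and its $U(\mathfrak{gl}(n,\mathbb{C}))$-module structure be as in the context. Let $\mathcal{B} \subset \mathcal{A}$ be the subalgebra of functions in $\mathcal{A}$ that are also regular at every $1$-critical point (see context). Let $\tau$ be the involution of $\mathbb{Z}^N$ swapping the coordinates $(k,i)$ and $(k,j)$, and for $z \in \mathbb{Z}^N_0$ define $$S(z) = \frac{T(z) + T(\tau(z))}{2}, \qquad A(z) = \frac{T(z) - T(\tau(z))}{2(x-y)} \qquad \text{in } V_{\mathcal{A}}.$$ Let $V_{\mathcal{B}} \subset V_{\mathcal{A}}$ be the $\mathcal{B}$-submodule generated by $\{S(z), A(z) \mid z \in \mathbb{Z}^N_0\}$. Then $V_{\mathcal{B}}$ is a $U(\mathfrak{gl}(n,\mathbb{C}))$-submodule of $V_{\mathcal{A}}$.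
   Context: Points $v \in \mathbb{C}^N$ are arrays $(v_{r,s})_{1 \leq s \leq r \leq n}$ and $\lambda_{r,s}$ is the coordinate function $v \mapsto v_{r,s}$. A point $v$ is generic if for all $1 \leq a < b \leq r < n$ one has $v_{r,a} - v_{r,b} \notin \mathbb{Z}$. A point $v$ is called $1$-critical (for the fixed pair) if $v_{k,i} = v_{k,j}$ and for every other pair $(r,a) \neq (r,b)$ of positions in the same row $r < n$ with $\{(r,a),(r,b)\} \neq \{(k,i),(k,j)\}$ one has $v_{r,a} - v_{r,b} \notin \mathbb{Z}$. $\mathcal{A}$ is the ring of rational functions $g/h$ ($g,h$ polynomials in the $\lambda_{r,s}$) with $h(v) \neq 0$ at every generic $v$; $\mathcal{B}$ consists of those $f \in \mathcal{A}$ which can be written with a denominator nonvanishing also at every $1$-critical point (e.g. $1/(x-y) \in \mathcal{A} \setminus \mathcal{B}$). $\mathbb{Z}^N_0$ is the set of $z \in \mathbb{Z}^N$ with $z_{n,s} = 0$ for all $s$; $\delta^{r,s} \in \mathbb{Z}^N$ is the unit vector at position $(r,s)$. For a rational function $f$ and $z \in \mathbb{Z}^N$, $f(\lambda^z)$ denotes $v \mapsto f(v+z)$. Put $p^{\pm}_{r,s} = \prod_{t=1}^{r \pm 1} (\lambda_{r,s} - \lambda_{r \pm 1, t})$, $q_{r,s} = \prod_{t \neq s,\, 1 \leq t \leq r} (\lambda_{r,s} - \lambda_{r,t})$, $|\lambda|_r = \lambda_{r,1} + \cdots + \lambda_{r,r}$, $|\lambda|_0 = 0$. $V_{\mathcal{A}}$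 is the free $\mathcal{A}$-module with basis $\{T(z) \mid z \in \mathbb{Z}^N_0\}$, equipped with the $U(\mathfrak{gl}(n,\mathbb{C}))$-module structure by $\mathcal{A}$-linear operators given on basis vectors by $E_{r,r+1} T(z) = -\sum_{s=1}^r \frac{p^+_{r,s}(\lambda^z)}{q_{r,s}(\lambda^z)} T(z + \delta^{r,s})$, $E_{r+1,r} T(z) = \sum_{s=1}^r \frac{p^-_{r,s}(\lambda^z)}{q_{r,s}(\lambda^z)} T(z - \delta^{r,s})$ for $1 \leq r < n$, and $E_{r,r} T(z) = (|\lambda^z|_r - |\lambda^z|_{r-1} + r - 1) T(z)$ for $1 \leq r \leq n$ (these formulas do define a $U(\mathfrak{gl}(n,\mathbb{C}))$-module). The element $A(z)$ is a vector of $V_{\mathcal{A}}$, not to be confused with the algebra $\mathcal{A}$. *)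

theory Defs
  imports Complex_Main
begin

type_synonym pt = "nat \<times> nat \<Rightarrow> complex"
type_synonym zvec = "nat \<times> nat \<Rightarrow> int"
type_synonym vec = "zvec \<Rightarrow> pt \<Rightarrow> complex"  (* coefficient of T(z), as a function of v *)

definition pos :: "nat \<Rightarrow> (nat \<times> nat) set" where
  "pos n = {(r, s). 1 \<le> s \<and> s \<le> r \<and> r \<le> n}"

definition generic :: "nat \<Rightarrow> pt \<Rightarrow> bool" where
  "generic n v \<longleftrightarrow> (\<forall>r a b. 1 \<le> a \<and> a < b \<and> b \<le> r \<and> r < n \<longrightarrow> v (r, a) - v (r, b) \<notin> \<int>)"

definition critical1 :: "nat \<Rightarrow> nat \<Rightarrow> nat \<Rightarrow> nat \<Rightarrow> pt \<Rightarrow> bool" where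
  "critical1 n k i j v \<longleftrightarrow> v (k, i) = v (k, j) \<and>
     (\<forall>r a b. 1 \<le> a \<and> a < b \<and> b \<le> r \<and> r < n \<and> (r, a, b) \<noteq> (k, i, j)
        \<longrightarrow> v (r, a) - v (r, b) \<notin> \<int>)"

inductive_set polyfun :: "nat \<Rightarrow> (pt \<Rightarrow> complex) set" for n where
  pconst: "(\<lambda>v. c) \<in> polyfun n"
| pcoord: "p \<in> pos n \<Longrightarrow> (\<lambda>v. v p) \<in> polyfun n"
| padd: "f \<in> polyfun n \<Longrightarrow> g \<in> polyfun n \<Longrightarrow> (\<lambda>v. f v + g v) \<in> polyfun n"
| pmult: "f \<in> polyfun n \<Longrightarrow> g \<in> polyfun n \<Longrightarrow> (\<lambda>v. f v * g v) \<in> polyfun n"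

text \<open>The algebra A: a rational function g/h with h nonvanishing at generic points is
  represented canonically by its values at generic points (a Zariski dense set),
  and by 0 at non-generic points.\<close>
definition ringA :: "nat \<Rightarrow> (pt \<Rightarrow> complex) set" where
  "ringA n = {f. (\<forall>v. \<not> generic n v \<longrightarrow> f v = 0) \<and>
     (\<exists>g\<in>polyfun n. \<exists>h\<in>polyfun n. \<forall>v. generic n v \<longrightarrow> h v \<noteq> 0 \<and> f v = g v / h v)}"

definition ringB :: "nat \<Rightarrow> nat \<Rightarrow> nat \<Rightarrow> nat \<Rightarrow> (pt \<Rightarrow> complex) set" where
  "ringB n k i j = {f \<in> ringA n. \<exists>g\<in>polyfun n. \<exists>h\<in>polyfun n.
     (\<forall>v. generic n v \<or> critical1 n k i j v \<longrightarrow> h v \<noteq> 0) \<and>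
     (\<forall>v. generic n v \<longrightarrow> f v = g v / h v)}"

definition Zvec0 :: "nat \<Rightarrow> zvec set" where
  "Zvec0 n = {z. (\<forall>p. p \<notin> pos n \<longrightarrow> z p = 0) \<and> (\<forall>s. z (n, s) = 0)}"

definition delta :: "nat \<Rightarrow> nat \<Rightarrow> zvec" where
  "delta r s = (\<lambda>p. if p = (r, s) then 1 else 0)"

definition zadd :: "zvec \<Rightarrow> zvec \<Rightarrow> zvec" where
  "zadd z z' = (\<lambda>p. z p + z' p)"

definition zsub :: "zvec \<Rightarrow> zvec \<Rightarrow> zvec" where
  "zsub z z' = (\<lambda>p. z p - z' p)"

definition shift :: "pt \<Rightarrow> zvec \<Rightarrow> pt" where
  "shift v z = (\<lambda>p. v p + of_int (z p))"

definition pplus :: "nat \<Rightarrow> nat \<Rightarrow> pt \<Rightarrow> complex" where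
  "pplus r s v = (\<Prod>t = 1..r + 1. v (r, s) - v (r + 1, t))"

definition pminus :: "nat \<Rightarrow> nat \<Rightarrow> pt \<Rightarrow> complex" where
  "pminus r s v = (\<Prod>t = 1..r - 1. v (r, s) - v (r - 1, t))"

definition qq :: "nat \<Rightarrow> nat \<Rightarrow> pt \<Rightarrow> complex" where
  "qq r s v = (\<Prod>t \<in> {1..r} - {s}. v (r, s) - v (r, t))"

definition rowsum :: "nat \<Rightarrow> pt \<Rightarrow> complex" where
  "rowsum r v = (\<Sum>s = 1..r. v (r, s))"

text \<open>The free A-module V_A with basis T(z), z in Z^N_0: finitely supported coefficient maps.\<close>
definition VA :: "nat \<Rightarrow> vec set" where
  "VA n = {c. finite {z. c z \<noteq> (\<lambda>v. 0)} \<and> (\<forall>z. c z \<in> ringA n) \<and> (\<forall>z. z \<notin> Zvec0 n \<longrightarrow> c z = (\<lambda>v. 0))}"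

definition Eup :: "nat \<Rightarrow> nat \<Rightarrow> vec \<Rightarrow> vec" where
  "Eup n r c = (\<lambda>w v. - (\<Sum>s = 1..r.
      (if generic n v then pplus r s (shift v (zsub w (delta r s))) / qq r s (shift v (zsub w (delta r s))) else 0)
      * c (zsub w (delta r s)) v))"

definition Edown :: "nat \<Rightarrow> nat \<Rightarrow> vec \<Rightarrow> vec" where
  "Edown n r c = (\<lambda>w v. (\<Sum>s = 1..r.
      (if generic n v then pminus r s (shift v (zadd w (delta r s))) / qq r s (shift v (zadd w (delta r s))) else 0)
      * c (zadd w (delta r s)) v))"

definition Ediag :: "nat \<Rightarrow> nat \<Rightarrow> vec \<Rightarrow> vec" where
  "Ediag n r c = (\<lambda>w v. (rowsum r (shift v w) - rowsum (r - 1) (shift v w) + of_nat r - 1) * c w v)"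

definition Tvec :: "nat \<Rightarrow> zvec \<Rightarrow> vec" where
  "Tvec n z = (\<lambda>w v. if w = z \<and> generic n v then 1 else 0)"

definition swapz :: "nat \<Rightarrow> nat \<Rightarrow> nat \<Rightarrow> zvec \<Rightarrow> zvec" where
  "swapz k i j z = z((k, i) := z (k, j), (k, j) := z (k, i))"

definition Svec :: "nat \<Rightarrow> nat \<Rightarrow> nat \<Rightarrow> nat \<Rightarrow> zvec \<Rightarrow> vec" where
  "Svec n k i j z = (\<lambda>w v. (Tvec n z w v + Tvec n (swapz k i j z) w v) / 2)"

definition Avec :: "nat \<Rightarrow> nat \<Rightarrow> nat \<Rightarrow> nat \<Rightarrow> zvec \<Rightarrow> vec" where
  "Avec n k i j z = (\<lambda>w v. if generic n v
      then (Tvec n z w v - Tvec n (swapz k i j z) w v) / (2 * (v (k, i) - v (k, j))) else 0)"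

definition VB :: "nat \<Rightarrow> nat \<Rightarrow> nat \<Rightarrow> nat \<Rightarrow> vec set" where
  "VB n k i j = {u. \<exists>F b c. finite F \<and> F \<subseteq> Zvec0 n \<and>
      (\<forall>z\<in>F. b z \<in> ringB n k i j \<and> c z \<in> ringB n k i j) \<and>
      u = (\<lambda>w v. \<Sum>z\<in>F. b z v * Svec n k i j z w v + c z v * Avec n k i j z w v)}"

end

theory Submission
  imports Defs
begin

text \<open>Since \<open>f T(z) + g T(\<tau> z) = (f + g) S(z) + (x - y)(f - g) A(z)\<close>, a finitely supported family
  \<open>u\<close> of coefficients lies in \<open>V\<^sub>\<B>\<close> iff for every \<open>w\<close> the pair \<open>(u(w), u(\<tau> w))\<close> is admissible:
  \<open>u(w) + u(\<tau> w)\<close> and \<open>(x - y)(u(w) - u(\<tau> w))\<close> lie in \<open>\<B>\<close>. The generators act by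
  \<open>(E u)(w) = \<Sum>\<^sub>s c\<^sub>s(w) u(\<sigma>\<^sub>s w)\<close> with coefficients satisfying \<open>c\<^sub>\<tau>\<^sub>s(\<tau> w)(v) = c\<^sub>s(w)(v \<circ> \<tau>)\<close>, so it
  suffices that multiplying an admissible pair by \<open>(\<alpha>, \<alpha> \<circ> \<tau>)\<close> keeps it admissible. For
  \<open>\<alpha> \<in> \<B>\<close> this holds because \<open>\<alpha>\<close> splits into \<open>\<alpha> + \<alpha> \<circ> \<tau>\<close> and the divided difference
  \<open>(\<alpha> - \<alpha> \<circ> \<tau>) / (x - y)\<close>, both in \<open>\<B>\<close>. The only coefficients outside \<open>\<B>\<close> have the denominator
  \<open>q\<^sub>k\<^sub>,\<^sub>i(\<lambda>\<^sup>z)\<close> or \<open>q\<^sub>k\<^sub>,\<^sub>j(\<lambda>\<^sup>z)\<close> with \<open>\<tau> z = z\<close>; they have a simple pole along \<open>x = y\<close>, but then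
  the pair is symmetric and \<open>(x - y) \<alpha> \<in> \<B>\<close> suffices.\<close>

section \<open>Polynomial and rational functions\<close>

lemma polyfun_prod:
  "finite T \<Longrightarrow> (\<And>t. t \<in> T \<Longrightarrow> f t \<in> polyfun n) \<Longrightarrow> (\<lambda>v. \<Prod>t\<in>T. f t v) \<in> polyfun n"
  by (induction T rule: finite_induct) (auto intro: polyfun.intros)

lemma polyfun_sum:
  "finite T \<Longrightarrow> (\<And>t. t \<in> T \<Longrightarrow> f t \<in> polyfun n) \<Longrightarrow> (\<lambda>v. \<Sum>t\<in>T. f t v) \<in> polyfun n"
  by (induction T rule: finite_induct) (auto intro: polyfun.intros)

lemma polyfun_diff: "f \<in> polyfun n \<Longrightarrow> g \<in> polyfun n \<Longrightarrow> (\<lambda>v. f v - g v) \<in> polyfun n"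
  using polyfun.padd[OF _ polyfun.pmult[OF polyfun.pconst[of "-1"]], of f n g] by simp

lemma polyfun_coord_diff: "p \<in> pos n \<Longrightarrow> q \<in> pos n \<Longrightarrow> (\<lambda>v. v p - v q) \<in> polyfun n"
  by (intro polyfun_diff polyfun.pcoord)

lemma polyfun_shift: "f \<in> polyfun n \<Longrightarrow> (\<lambda>v. f (shift v z)) \<in> polyfun n"
  by (induction rule: polyfun.induct) (auto simp: shift_def intro: polyfun.intros)

lemma polyfun_pplus: "r < n \<Longrightarrow> s \<in> {1..r} \<Longrightarrow> pplus r s \<in> polyfun n"
  unfolding pplus_def[abs_def] by (intro polyfun_prod polyfun_coord_diff) (auto simp: pos_def)

lemma polyfun_pminus: "r < n \<Longrightarrow> s \<in> {1..r} \<Longrightarrow> pminus r s \<in> polyfun n"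
  unfolding pminus_def[abs_def] by (intro polyfun_prod polyfun_coord_diff) (auto simp: pos_def)

lemma polyfun_qq: "r < n \<Longrightarrow> s \<in> {1..r} \<Longrightarrow> qq r s \<in> polyfun n"
  unfolding qq_def[abs_def] by (intro polyfun_prod polyfun_coord_diff) (auto simp: pos_def)

lemma polyfun_rowsum: "r \<le> n \<Longrightarrow> rowsum r \<in> polyfun n"
  unfolding rowsum_def[abs_def] by (intro polyfun_sum polyfun.pcoord) (auto simp: pos_def)

lemma qq_shift:
  "qq r s (shift v z) = (\<Prod>t \<in> {1..r} - {s}. v (r, s) - v (r, t) + of_int (z (r, s) - z (r, t)))"
  unfolding qq_def shift_def by (intro prod.cong) (auto simp: algebra_simps)

definition rational_on :: "nat \<Rightarrow> pt set \<Rightarrow> (pt \<Rightarrow> complex) \<Rightarrow> bool" where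
  "rational_on n S f \<longleftrightarrow> (\<exists>g\<in>polyfun n. \<exists>h\<in>polyfun n.
     (\<forall>v\<in>S. h v \<noteq> 0) \<and> (\<forall>v. generic n v \<longrightarrow> f v = g v / h v))"

lemma rational_onI:
  "g \<in> polyfun n \<Longrightarrow> h \<in> polyfun n \<Longrightarrow> (\<And>v. v \<in> S \<Longrightarrow> h v \<noteq> 0) \<Longrightarrow>
   (\<And>v. generic n v \<Longrightarrow> f v = g v / h v) \<Longrightarrow> rational_on n S f"
  unfolding rational_on_def by blast

lemma rational_onE:
  assumes "rational_on n S f"
  obtains g h where "g \<in> polyfun n" "h \<in> polyfun n" "\<And>v. v \<in> S \<Longrightarrow> h v \<noteq> 0"
    "\<And>v. generic n v \<Longrightarrow> f v = g v / h v"
  using assms unfolding rational_on_def by blast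

lemma rational_on_cong:
  "rational_on n S f \<Longrightarrow> (\<And>v. generic n v \<Longrightarrow> f v = f' v) \<Longrightarrow> rational_on n S f'"
  unfolding rational_on_def by metis

lemma rational_on_subset: "rational_on n S f \<Longrightarrow> S' \<subseteq> S \<Longrightarrow> rational_on n S' f"
  unfolding rational_on_def by blast

lemma rational_on_polyfun: "p \<in> polyfun n \<Longrightarrow> rational_on n S p"
  by (rule rational_onI[of p _ "\<lambda>v. 1"]) (auto intro: polyfun.pconst)

lemma rational_on_const: "rational_on n S (\<lambda>v. c)"
  by (intro rational_on_polyfun polyfun.pconst)

lemma rational_on_add:
  assumes S: "Collect (generic n) \<subseteq> S" and "rational_on n S f" "rational_on n S f'"
  shows "rational_on n S (\<lambda>v. f v + f' v)"
proof -
  obtain g h where f: "g \<in> polyfun n" "h \<in> polyfun n" "\<And>v. v \<in> S \<Longrightarrow> h v \<noteq> 0"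
      "\<And>v. generic n v \<Longrightarrow> f v = g v / h v"
    using rational_onE[OF assms(2)] by blast
  obtain g' h' where f': "g' \<in> polyfun n" "h' \<in> polyfun n" "\<And>v. v \<in> S \<Longrightarrow> h' v \<noteq> 0"
      "\<And>v. generic n v \<Longrightarrow> f' v = g' v / h' v"
    using rational_onE[OF assms(3)] by blast
  show ?thesis
  proof (rule rational_onI[of "\<lambda>v. g v * h' v + g' v * h v" _ "\<lambda>v. h v * h' v"])
    fix v assume "generic n v"
    then show "f v + f' v = (g v * h' v + g' v * h v) / (h v * h' v)"
      using S f f' by (auto simp: field_simps)
  qed (use f f' in \<open>auto intro: polyfun.intros\<close>)
qed

lemma rational_on_mult:
  assumes "rational_on n S f" "rational_on n S f'"
  shows "rational_on n S (\<lambda>v. f v * f' v)"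
proof -
  obtain g h where f: "g \<in> polyfun n" "h \<in> polyfun n" "\<And>v. v \<in> S \<Longrightarrow> h v \<noteq> 0"
      "\<And>v. generic n v \<Longrightarrow> f v = g v / h v"
    using rational_onE[OF assms(1)] by blast
  obtain g' h' where f': "g' \<in> polyfun n" "h' \<in> polyfun n" "\<And>v. v \<in> S \<Longrightarrow> h' v \<noteq> 0"
      "\<And>v. generic n v \<Longrightarrow> f' v = g' v / h' v"
    using rational_onE[OF assms(2)] by blast
  show ?thesis
    by (rule rational_onI[of "\<lambda>v. g v * g' v" _ "\<lambda>v. h v * h' v"]) (use f f' in \<open>auto intro: polyfun.intros\<close>)
qed

lemma rational_on_cmult: "rational_on n S f \<Longrightarrow> rational_on n S (\<lambda>v. c * f v)"
  by (rule rational_on_mult[OF rational_on_const])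

lemma rational_on_diff:
  assumes "Collect (generic n) \<subseteq> S" "rational_on n S f" "rational_on n S f'"
  shows "rational_on n S (\<lambda>v. f v - f' v)"
  using rational_on_add[OF assms(1,2) rational_on_cmult[OF assms(3), of "-1"]] by simp

lemma rational_on_divide:
  assumes "rational_on n S f" "p \<in> polyfun n" "\<And>v. v \<in> S \<Longrightarrow> p v \<noteq> 0"
  shows "rational_on n S (\<lambda>v. f v / p v)"
proof -
  obtain g h where f: "g \<in> polyfun n" "h \<in> polyfun n" "\<And>v. v \<in> S \<Longrightarrow> h v \<noteq> 0"
      "\<And>v. generic n v \<Longrightarrow> f v = g v / h v"
    using rational_onE[OF assms(1)] by blast
  show ?thesis
    by (rule rational_onI[of g _ "\<lambda>v. h v * p v"]) (use f assms(2,3) in \<open>auto intro: polyfun.intros\<close>)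
qed

lemma ringA_iff: "f \<in> ringA n \<longleftrightarrow> (\<forall>v. \<not> generic n v \<longrightarrow> f v = 0) \<and> rational_on n (Collect (generic n)) f"
  unfolding ringA_def rational_on_def by blast

lemma ringB_iff: "f \<in> ringB n k i j \<longleftrightarrow> (\<forall>v. \<not> generic n v \<longrightarrow> f v = 0) \<and>
    rational_on n {v. generic n v \<or> critical1 n k i j v} f"
  unfolding ringB_def ringA_def rational_on_def by blast

definition ladder_coeff :: "nat \<Rightarrow> (pt \<Rightarrow> complex) \<Rightarrow> nat \<Rightarrow> nat \<Rightarrow> zvec \<Rightarrow> pt \<Rightarrow> complex" where
  "ladder_coeff n P r s z v = (if generic n v then P (shift v z) / qq r s (shift v z) else 0)"

definition ladder :: "nat \<Rightarrow> nat \<Rightarrow> (nat \<Rightarrow> pt \<Rightarrow> complex) \<Rightarrow> (nat \<Rightarrow> zvec \<Rightarrow> zvec) \<Rightarrow> vec \<Rightarrow> vec" where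
  "ladder n r P \<sigma> u = (\<lambda>w v. \<Sum>s = 1..r. ladder_coeff n (P s) r s (\<sigma> s w) v * u (\<sigma> s w) v)"

lemma Eup_eq_ladder:
  "Eup n r u = (\<lambda>w v. -1 * ladder n r (pplus r) (\<lambda>s w. zsub w (delta r s)) u w v)"
  unfolding Eup_def ladder_def ladder_coeff_def by simp

lemma Edown_eq_ladder: "Edown n r u = ladder n r (pminus r) (\<lambda>s w. zadd w (delta r s)) u"
  unfolding Edown_def ladder_def ladder_coeff_def by simp

lemma inj_zadd: "inj (\<lambda>w. zadd w d)" and inj_zsub: "inj (\<lambda>w. zsub w d)"
  by (auto intro!: injI simp: zadd_def zsub_def fun_eq_iff)

lemma Zvec0_zadd_delta_imp:
  "r < n \<Longrightarrow> s \<in> {1..r} \<Longrightarrow> zadd w (delta r s) \<in> Zvec0 n \<Longrightarrow> w \<in> Zvec0 n"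
  unfolding Zvec0_def zadd_def delta_def pos_def by (auto split: if_splits) (metis le_trans less_imp_le)

lemma Zvec0_zsub_delta_imp:
  "r < n \<Longrightarrow> s \<in> {1..r} \<Longrightarrow> zsub w (delta r s) \<in> Zvec0 n \<Longrightarrow> w \<in> Zvec0 n"
  unfolding Zvec0_def zsub_def delta_def pos_def by (auto split: if_splits)

section \<open>Symmetry under \<open>\<tau>\<close>\<close>

text \<open>The involution \<open>\<tau>\<close> of the paper is \<open>z \<mapsto> z \<circ> \<tau>\<close> for the swap \<open>\<tau>\<close> of positions defined below;
  it acts on points \<open>v\<close> in the same way.\<close>

locale critical_pair =
  fixes n k i j :: nat
  assumes i_pos: "1 \<le> i" and i_less_j: "i < j" and j_le_k: "j \<le> k" and k_less_n: "k < n"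
begin

definition swap_col :: "nat \<Rightarrow> nat \<Rightarrow> nat" where
  "swap_col r t = (if r = k \<and> t = i then j else if r = k \<and> t = j then i else t)"

definition \<tau> :: "nat \<times> nat \<Rightarrow> nat \<times> nat" where
  "\<tau> p = (fst p, swap_col (fst p) (snd p))"

abbreviation x_minus_y :: "pt \<Rightarrow> complex" where
  "x_minus_y v \<equiv> v (k, i) - v (k, j)"

lemma swap_col_swap_col [simp]: "swap_col r (swap_col r t) = t"
  unfolding swap_col_def using i_less_j by auto

lemma swap_col_eq_iff [simp]: "swap_col r a = swap_col r b \<longleftrightarrow> a = b"
  by (metis swap_col_swap_col)

lemma swap_col_in_range: "t \<in> {1..r} \<Longrightarrow> swap_col r t \<in> {1..r}"
  using i_pos i_less_j j_le_k by (auto simp: swap_col_def)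

lemma bij_betw_swap_col: "bij_betw (swap_col r) {1..r} {1..r}"
  by (rule bij_betw_byWitness[where f' = "swap_col r"])
    (use i_pos i_less_j j_le_k in \<open>auto simp: swap_col_def\<close>)

lemma bij_betw_swap_col_remove:
  "s \<in> {1..r} \<Longrightarrow> bij_betw (swap_col r) ({1..r} - {s}) ({1..r} - {swap_col r s})"
  by (rule bij_betw_byWitness[where f' = "swap_col r"])
    (use i_pos i_less_j j_le_k in \<open>auto simp: swap_col_def\<close>)

lemma \<tau>_pair [simp]: "\<tau> (r, t) = (r, swap_col r t)"
  by (simp add: \<tau>_def)

lemma \<tau>_\<tau> [simp]: "\<tau> (\<tau> p) = p"
  by (cases p) simp

lemma \<tau>_comp_\<tau> [simp]: "\<tau> \<circ> \<tau> = id"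
  by (simp add: fun_eq_iff)

lemma comp_\<tau>_\<tau> [simp]: "f \<circ> \<tau> \<circ> \<tau> = f"
  by (simp add: fun_eq_iff)

lemma comp_\<tau>_eq_iff: "w = z \<circ> \<tau> \<longleftrightarrow> z = w \<circ> \<tau>"
  by auto

lemma swap_col_i [simp]: "swap_col k i = j" and swap_col_j [simp]: "swap_col k j = i"
  by (auto simp: swap_col_def)

lemma swapz_eq: "swapz k i j z = z \<circ> \<tau>"
  unfolding swapz_def using i_less_j by (auto simp: fun_eq_iff swap_col_def)

lemma \<tau>_fixes: "z (k, i) = z (k, j) \<Longrightarrow> z \<circ> \<tau> = z"
  by (auto simp: fun_eq_iff swap_col_def)

lemma ki_pos: "(k, i) \<in> pos n" and kj_pos: "(k, j) \<in> pos n"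
  using i_pos i_less_j j_le_k k_less_n by (auto simp: pos_def)

lemma swap_col_in_pos_iff [simp]: "(r, swap_col r t) \<in> pos n \<longleftrightarrow> (r, t) \<in> pos n"
  using i_pos i_less_j j_le_k by (auto simp: pos_def swap_col_def)

lemma shift_comp_\<tau>: "shift v (z \<circ> \<tau>) = shift (v \<circ> \<tau>) z \<circ> \<tau>"
  by (simp add: shift_def fun_eq_iff)

lemma zadd_comp_\<tau>: "zadd (w \<circ> \<tau>) (delta r (swap_col r s)) = zadd w (delta r s) \<circ> \<tau>"
  unfolding zadd_def delta_def by (auto simp: fun_eq_iff)

lemma zsub_comp_\<tau>: "zsub (w \<circ> \<tau>) (delta r (swap_col r s)) = zsub w (delta r s) \<circ> \<tau>"
  unfolding zsub_def delta_def by (auto simp: fun_eq_iff)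

lemma Zvec0_comp_\<tau>: "z \<in> Zvec0 n \<Longrightarrow> z \<circ> \<tau> \<in> Zvec0 n"
  unfolding Zvec0_def using ki_pos kj_pos by (auto simp: swap_col_def)

lemma Zvec0_comp_\<tau>_iff [simp]: "z \<circ> \<tau> \<in> Zvec0 n \<longleftrightarrow> z \<in> Zvec0 n"
  using Zvec0_comp_\<tau>[of z] Zvec0_comp_\<tau>[of "z \<circ> \<tau>"] by auto

lemma polyfun_comp_\<tau>: "f \<in> polyfun n \<Longrightarrow> (\<lambda>v. f (v \<circ> \<tau>)) \<in> polyfun n"
proof (induction rule: polyfun.induct)
  case (pcoord p)
  then show ?case by (cases p) (auto intro: polyfun.pcoord)
qed (auto intro: polyfun.intros)

lemma polyfun_divided_difference:
  "f \<in> polyfun n \<Longrightarrow> \<exists>d\<in>polyfun n. \<forall>v. f v - f (v \<circ> \<tau>) = x_minus_y v * d v"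
proof (induction rule: polyfun.induct)
  case (pconst c)
  show ?case by (rule bexI[of _ "\<lambda>v. 0"]) (auto intro: polyfun.intros)
next
  case (pcoord p)
  consider "p = (k, i)" | "p = (k, j)" | "p \<noteq> (k, i)" "p \<noteq> (k, j)"
    by blast
  then show ?case
  proof cases
    case 1
    show ?thesis by (rule bexI[of _ "\<lambda>v. 1"]) (auto simp: 1 intro: polyfun.intros)
  next
    case 2
    show ?thesis by (rule bexI[of _ "\<lambda>v. -1"]) (auto simp: 2 intro: polyfun.intros)
  next
    case 3
    then have "\<tau> p = p" by (cases p) (auto simp: swap_col_def)
    then show ?thesis by (intro bexI[of _ "\<lambda>v. 0"]) (auto intro: polyfun.intros)
  qed
next
  case (padd f g)
  then obtain d1 d2 where "d1 \<in> polyfun n" "d2 \<in> polyfun n"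
    and d: "\<And>v. f v - f (v \<circ> \<tau>) = x_minus_y v * d1 v" "\<And>v. g v - g (v \<circ> \<tau>) = x_minus_y v * d2 v"
    by blast
  moreover have "f v + g v - (f (v \<circ> \<tau>) + g (v \<circ> \<tau>)) = x_minus_y v * (d1 v + d2 v)" for v
    unfolding distrib_left d[symmetric] by simp
  ultimately show ?case
    by (intro bexI[of _ "\<lambda>v. d1 v + d2 v"]) (blast intro: polyfun.intros)+
next
  case (pmult f g)
  then obtain d1 d2 where d12: "d1 \<in> polyfun n" "d2 \<in> polyfun n"
    and d: "\<And>v. f v - f (v \<circ> \<tau>) = x_minus_y v * d1 v" "\<And>v. g v - g (v \<circ> \<tau>) = x_minus_y v * d2 v"
    by blast
  have eq: "f v * g v - f (v \<circ> \<tau>) * g (v \<circ> \<tau>) =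
      x_minus_y v * (d1 v * g v + f (v \<circ> \<tau>) * d2 v)" for v
  proof -
    have "f v * g v - f (v \<circ> \<tau>) * g (v \<circ> \<tau>) =
        (f v - f (v \<circ> \<tau>)) * g v + f (v \<circ> \<tau>) * (g v - g (v \<circ> \<tau>))"
      by (simp add: algebra_simps)
    then show ?thesis unfolding d by (simp add: algebra_simps)
  qed
  have "(\<lambda>v. d1 v * g v + f (v \<circ> \<tau>) * d2 v) \<in> polyfun n"
    using d12 pmult.hyps polyfun_comp_\<tau>[OF pmult.hyps(1)] by (intro polyfun.padd polyfun.pmult)
  then show ?case by (rule bexI[rotated]) (use eq in blast)
qed

lemma genericD:
  assumes "generic n v" "a \<in> {1..r}" "b \<in> {1..r}" "a \<noteq> b" "r < n"
  shows "v (r, a) - v (r, b) \<notin> \<int>"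
proof (cases "a < b")
  case False
  then have "v (r, b) - v (r, a) \<notin> \<int>" using assms unfolding generic_def by auto
  then show ?thesis by (metis Ints_minus minus_diff_eq)
qed (use assms in \<open>auto simp: generic_def\<close>)

lemma critical1D:
  assumes "critical1 n k i j v" "a \<in> {1..r}" "b \<in> {1..r}" "a \<noteq> b" "r < n"
    and "\<not> (r = k \<and> {a, b} = {i, j})"
  shows "v (r, a) - v (r, b) \<notin> \<int>"
proof (cases "a < b")
  case True
  moreover have "(r, a, b) \<noteq> (k, i, j)" using assms(6) by auto
  ultimately show ?thesis using assms(1-5) unfolding critical1_def by auto
next
  case False
  moreover have "(r, b, a) \<noteq> (k, i, j)" using assms(6) by auto
  ultimately have "v (r, b) - v (r, a) \<notin> \<int>" using assms(1-5) unfolding critical1_def by auto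
  then show ?thesis by (metis Ints_minus minus_diff_eq)
qed

lemma generic_comp_\<tau>: "generic n v \<Longrightarrow> generic n (v \<circ> \<tau>)"
  unfolding generic_def[of n "v \<circ> \<tau>"]
proof (intro allI impI)
  fix r a b assume "generic n v" "1 \<le> a \<and> a < b \<and> b \<le> r \<and> r < n"
  then show "(v \<circ> \<tau>) (r, a) - (v \<circ> \<tau>) (r, b) \<notin> \<int>"
    using genericD[of v "swap_col r a" r "swap_col r b"] swap_col_in_range[of a r]
      swap_col_in_range[of b r] by auto
qed

lemma generic_comp_\<tau>_iff [simp]: "generic n (v \<circ> \<tau>) \<longleftrightarrow> generic n v"
  using generic_comp_\<tau>[of v] generic_comp_\<tau>[of "v \<circ> \<tau>"] by auto

lemma critical1_comp_\<tau>:
  assumes "critical1 n k i j v"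
  shows "critical1 n k i j (v \<circ> \<tau>)"
  unfolding critical1_def[of n k i j "v \<circ> \<tau>"]
proof (intro conjI allI impI)
  show "(v \<circ> \<tau>) (k, i) = (v \<circ> \<tau>) (k, j)" using assms by (simp add: critical1_def)
  fix r a b assume r: "1 \<le> a \<and> a < b \<and> b \<le> r \<and> r < n \<and> (r, a, b) \<noteq> (k, i, j)"
  then have "\<not> (r = k \<and> {swap_col r a, swap_col r b} = {i, j})"
    using i_less_j by (auto simp: swap_col_def doubleton_eq_iff split: if_splits)
  then show "(v \<circ> \<tau>) (r, a) - (v \<circ> \<tau>) (r, b) \<notin> \<int>"
    using r critical1D[OF assms, of "swap_col r a" r "swap_col r b"] swap_col_in_range[of a r]
      swap_col_in_range[of b r] by auto
qed

lemma critical1_comp_\<tau>_iff [simp]: "critical1 n k i j (v \<circ> \<tau>) \<longleftrightarrow> critical1 n k i j v"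
  using critical1_comp_\<tau>[of v] critical1_comp_\<tau>[of "v \<circ> \<tau>"] by auto

lemma x_minus_y_nonzero: "generic n v \<Longrightarrow> x_minus_y v \<noteq> 0"
  using genericD[of v i k j] i_pos i_less_j j_le_k k_less_n by auto

text \<open>These are the factors of the shifted denominators \<open>q\<^sub>r\<^sub>,\<^sub>s(\<lambda>\<^sup>z)\<close>, cf. \<open>qq_shift\<close>.\<close>

lemma shifted_diff_nonzero:
  assumes "a \<in> {1..r}" "b \<in> {1..r}" "a \<noteq> b" "r < n"
    and v: "generic n v \<or> critical1 n k i j v"
    and m: "r = k \<and> {a, b} = {i, j} \<Longrightarrow> m \<noteq> 0"
  shows "v (r, a) - v (r, b) + of_int m \<noteq> 0"
proof
  assume zero: "v (r, a) - v (r, b) + of_int m = 0"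
  then have "v (r, a) - v (r, b) = of_int (- m)" by (simp add: eq_neg_iff_add_eq_0)
  then have int: "v (r, a) - v (r, b) \<in> \<int>" by simp
  show False
  proof (cases "generic n v")
    case True
    then show False using int genericD[OF True assms(1-4)] by blast
  next
    case False
    then have crit: "critical1 n k i j v" using v by blast
    show False
    proof (cases "r = k \<and> {a, b} = {i, j}")
      case True
      then have "v (r, a) = v (r, b)"
        using crit by (auto simp: critical1_def doubleton_eq_iff)
      then show False using zero m True by simp
    next
      case False
      then show False using int critical1D[OF crit assms(1-4)] by blast
    qed
  qed
qed

abbreviation regular_pts :: "pt set" where
  "regular_pts \<equiv> {v. generic n v \<or> critical1 n k i j v}"

abbreviation regular :: "(pt \<Rightarrow> complex) \<Rightarrow> bool" where
  "regular \<equiv> rational_on n regular_pts"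

lemma generic_subset_regular_pts: "Collect (generic n) \<subseteq> regular_pts"
  by blast

lemmas regular_add = rational_on_add[OF generic_subset_regular_pts]
  and regular_diff = rational_on_diff[OF generic_subset_regular_pts]

lemma regular_x_minus_y: "regular x_minus_y"
  by (intro rational_on_polyfun polyfun_coord_diff ki_pos kj_pos)

lemma regular_comp_\<tau>:
  assumes "regular f"
  shows "regular (\<lambda>v. f (v \<circ> \<tau>))"
proof -
  obtain g h where f: "g \<in> polyfun n" "h \<in> polyfun n" "\<And>v. v \<in> regular_pts \<Longrightarrow> h v \<noteq> 0"
      "\<And>v. generic n v \<Longrightarrow> f v = g v / h v"
    using rational_onE[OF assms] by blast
  show ?thesis
  proof (rule rational_onI[of "\<lambda>v. g (v \<circ> \<tau>)" _ "\<lambda>v. h (v \<circ> \<tau>)"])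
    fix v
    show "v \<in> regular_pts \<Longrightarrow> h (v \<circ> \<tau>) \<noteq> 0" using f(3)[of "v \<circ> \<tau>"] by simp
    show "generic n v \<Longrightarrow> f (v \<circ> \<tau>) = g (v \<circ> \<tau>) / h (v \<circ> \<tau>)" using f(4)[of "v \<circ> \<tau>"] by simp
  qed (use f polyfun_comp_\<tau> in auto)
qed

text \<open>With \<open>f = g/h\<close>, the numerator \<open>N = g (h \<circ> \<tau>) - (g \<circ> \<tau>) h\<close> of \<open>f - f \<circ> \<tau>\<close> is
  \<open>\<tau>\<close>-antiinvariant, so \<open>2N = N - N \<circ> \<tau>\<close> is divisible by \<open>x - y\<close>, while the denominator
  \<open>h (h \<circ> \<tau>)\<close> stays regular because the regular points are \<open>\<tau>\<close>-invariant.\<close>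

lemma regular_divided_difference:
  assumes "regular f"
  shows "regular (\<lambda>v. (f v - f (v \<circ> \<tau>)) / x_minus_y v)"
proof -
  obtain g h where f: "g \<in> polyfun n" "h \<in> polyfun n" "\<And>v. v \<in> regular_pts \<Longrightarrow> h v \<noteq> 0"
      "\<And>v. generic n v \<Longrightarrow> f v = g v / h v"
    using rational_onE[OF assms] by blast
  define N where "N v = g v * h (v \<circ> \<tau>) - g (v \<circ> \<tau>) * h v" for v
  have "N \<in> polyfun n"
    unfolding N_def[abs_def] using f polyfun_comp_\<tau> by (intro polyfun_diff polyfun.pmult) auto
  then obtain d where d: "d \<in> polyfun n" "\<And>v. N v - N (v \<circ> \<tau>) = x_minus_y v * d v"
    using polyfun_divided_difference by blast
  have N_anti: "N (v \<circ> \<tau>) = - N v" for v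
    unfolding N_def by (simp add: comp_assoc)
  show ?thesis
  proof (rule rational_onI[of d _ "\<lambda>v. 2 * h v * h (v \<circ> \<tau>)"])
    show "(\<lambda>v. 2 * h v * h (v \<circ> \<tau>)) \<in> polyfun n"
      using f polyfun_comp_\<tau> by (intro polyfun.pmult polyfun.pconst) auto
    fix v
    show "v \<in> regular_pts \<Longrightarrow> 2 * h v * h (v \<circ> \<tau>) \<noteq> 0"
      using f(3) f(3)[of "v \<circ> \<tau>"] by auto
    assume gen: "generic n v"
    have h: "h v \<noteq> 0" "h (v \<circ> \<tau>) \<noteq> 0" using f(3) f(3)[of "v \<circ> \<tau>"] gen by auto
    have "f v - f (v \<circ> \<tau>) = N v / (h v * h (v \<circ> \<tau>))"
      using f(4)[of v] f(4)[of "v \<circ> \<tau>"] gen h unfolding N_def by (simp add: field_simps)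
    moreover have "N v = x_minus_y v * d v / 2" using d(2)[of v] N_anti[of v] by (simp add: field_simps)
    ultimately have "f v - f (v \<circ> \<tau>) = x_minus_y v * (d v / (2 * h v * h (v \<circ> \<tau>)))"
      by simp
    then show "(f v - f (v \<circ> \<tau>)) / x_minus_y v = d v / (2 * h v * h (v \<circ> \<tau>))"
      using x_minus_y_nonzero[OF gen] h by (simp add: field_simps)
  qed (fact d)
qed

subsection \<open>Admissible pairs\<close>

text \<open>Since \<open>f T(z) + g T(\<tau> z) = (f + g) S(z) + (x - y)(f - g) A(z)\<close>, admissibility of
  \<open>(f, g)\<close> is what makes \<open>f T(z) + g T(\<tau> z)\<close> a \<open>\<B>\<close>-combination of \<open>S(z)\<close> and \<open>A(z)\<close>.\<close>

definition admissible :: "(pt \<Rightarrow> complex) \<Rightarrow> (pt \<Rightarrow> complex) \<Rightarrow> bool" where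
  "admissible f g \<longleftrightarrow> regular (\<lambda>v. f v + g v) \<and> regular (\<lambda>v. x_minus_y v * (f v - g v))"

lemma admissible_zero: "admissible (\<lambda>v. 0) (\<lambda>v. 0)"
  unfolding admissible_def using rational_on_const[of n _ 0] by simp

lemma admissible_add:
  assumes "admissible f g" "admissible f' g'"
  shows "admissible (\<lambda>v. f v + f' v) (\<lambda>v. g v + g' v)"
proof -
  have fg: "regular (\<lambda>v. f v + g v)" "regular (\<lambda>v. x_minus_y v * (f v - g v))"
    and fg': "regular (\<lambda>v. f' v + g' v)" "regular (\<lambda>v. x_minus_y v * (f' v - g' v))"
    using assms unfolding admissible_def by auto
  show ?thesis
    unfolding admissible_def
  proof
    show "regular (\<lambda>v. f v + f' v + (g v + g' v))"
      using regular_add[OF fg(1) fg'(1)] by (rule rational_on_cong) simp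
    show "regular (\<lambda>v. x_minus_y v * (f v + f' v - (g v + g' v)))"
      using regular_add[OF fg(2) fg'(2)] by (rule rational_on_cong) (simp add: algebra_simps)
  qed
qed

lemma admissible_cmult:
  assumes "admissible f g"
  shows "admissible (\<lambda>v. c * f v) (\<lambda>v. c * g v)"
proof -
  have fg: "regular (\<lambda>v. f v + g v)" "regular (\<lambda>v. x_minus_y v * (f v - g v))"
    using assms unfolding admissible_def by auto
  show ?thesis
    unfolding admissible_def
  proof
    show "regular (\<lambda>v. c * f v + c * g v)"
      using rational_on_cmult[OF fg(1), of c] by (rule rational_on_cong) (simp add: algebra_simps)
    show "regular (\<lambda>v. x_minus_y v * (c * f v - c * g v))"
      using rational_on_cmult[OF fg(2), of c] by (rule rational_on_cong) (simp add: algebra_simps)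
  qed
qed

lemma admissible_sum:
  "finite T \<Longrightarrow> (\<And>t. t \<in> T \<Longrightarrow> admissible (f t) (g t)) \<Longrightarrow>
   admissible (\<lambda>v. \<Sum>t\<in>T. f t v) (\<lambda>v. \<Sum>t\<in>T. g t v)"
  by (induction T rule: finite_induct) (auto intro: admissible_zero admissible_add)

text \<open>Multiplying by \<open>\<alpha>\<close> is compatible with \<open>\<tau>\<close> only if the partner is multiplied by \<open>\<alpha> \<circ> \<tau>\<close>;
  the proof splits \<open>\<alpha>\<close> into \<open>\<alpha> + \<alpha> \<circ> \<tau>\<close> and the divided difference \<open>(\<alpha> - \<alpha> \<circ> \<tau>) / (x - y)\<close>.\<close>

lemma admissible_mult:
  assumes fg: "admissible f g" and \<alpha>: "regular \<alpha>"
  shows "admissible (\<lambda>v. \<alpha> v * f v) (\<lambda>v. \<alpha> (v \<circ> \<tau>) * g v)"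
proof -
  define \<alpha>_sum where "\<alpha>_sum v = \<alpha> v + \<alpha> (v \<circ> \<tau>)" for v
  define \<alpha>_dd where "\<alpha>_dd v = (\<alpha> v - \<alpha> (v \<circ> \<tau>)) / x_minus_y v" for v
  have plus: "regular \<alpha>_sum"
    unfolding \<alpha>_sum_def[abs_def] using \<alpha> regular_comp_\<tau>[OF \<alpha>] by (rule regular_add)
  have minus: "regular \<alpha>_dd"
    unfolding \<alpha>_dd_def[abs_def] using \<alpha> by (rule regular_divided_difference)
  have S: "regular (\<lambda>v. f v + g v)" and D: "regular (\<lambda>v. x_minus_y v * (f v - g v))"
    using fg unfolding admissible_def by auto
  have xy2: "regular (\<lambda>v. x_minus_y v * x_minus_y v)"
    using rational_on_mult[OF regular_x_minus_y regular_x_minus_y] .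
  have sum: "regular (\<lambda>v. 1/2 * (\<alpha>_sum v * (f v + g v) + \<alpha>_dd v * (x_minus_y v * (f v - g v))))"
    by (intro rational_on_cmult regular_add rational_on_mult[OF plus S] rational_on_mult[OF minus D])
  have diff: "regular (\<lambda>v. 1/2 * (x_minus_y v * x_minus_y v * \<alpha>_dd v * (f v + g v) +
      \<alpha>_sum v * (x_minus_y v * (f v - g v))))"
    by (intro rational_on_cmult regular_add rational_on_mult[OF rational_on_mult[OF xy2 minus] S]
        rational_on_mult[OF plus D])
  show ?thesis
    unfolding admissible_def
  proof
    show "regular (\<lambda>v. \<alpha> v * f v + \<alpha> (v \<circ> \<tau>) * g v)"
      using sum
    proof (rule rational_on_cong)
      fix v assume "generic n v"
      with x_minus_y_nonzero show "1/2 * (\<alpha>_sum v * (f v + g v) + \<alpha>_dd v * (x_minus_y v * (f v - g v))) =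
          \<alpha> v * f v + \<alpha> (v \<circ> \<tau>) * g v"
        unfolding \<alpha>_sum_def \<alpha>_dd_def by (simp add: field_simps)
    qed
    show "regular (\<lambda>v. x_minus_y v * (\<alpha> v * f v - \<alpha> (v \<circ> \<tau>) * g v))"
      using diff
    proof (rule rational_on_cong)
      fix v assume "generic n v"
      with x_minus_y_nonzero show "1/2 * (x_minus_y v * x_minus_y v * \<alpha>_dd v * (f v + g v) +
          \<alpha>_sum v * (x_minus_y v * (f v - g v))) = x_minus_y v * (\<alpha> v * f v - \<alpha> (v \<circ> \<tau>) * g v)"
        unfolding \<alpha>_sum_def \<alpha>_dd_def by (simp add: field_simps)
    qed
  qed
qed

lemma admissible_mult_pole:
  assumes ff: "admissible f f" and \<beta>: "regular (\<lambda>v. x_minus_y v * \<alpha> v)"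
  shows "admissible (\<lambda>v. \<alpha> v * f v) (\<lambda>v. \<alpha> (v \<circ> \<tau>) * f v)"
proof -
  define \<beta> where "\<beta> v = x_minus_y v * \<alpha> v" for v
  have S: "regular (\<lambda>v. f v + f v)" using ff unfolding admissible_def by auto
  have "regular \<beta>" using \<beta> unfolding \<beta>_def[abs_def] .
  then have sum: "regular (\<lambda>v. 1/2 * ((\<beta> v - \<beta> (v \<circ> \<tau>)) / x_minus_y v) * (f v + f v))"
    and diff: "regular (\<lambda>v. 1/2 * (\<beta> v + \<beta> (v \<circ> \<tau>)) * (f v + f v))"
    by (intro rational_on_mult[OF _ S] rational_on_cmult regular_divided_difference
        regular_add regular_comp_\<tau>; assumption)+
  show ?thesis
    unfolding admissible_def
  proof
    show "regular (\<lambda>v. \<alpha> v * f v + \<alpha> (v \<circ> \<tau>) * f v)"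
      using sum
    proof (rule rational_on_cong)
      fix v assume "generic n v"
      with x_minus_y_nonzero show "1/2 * ((\<beta> v - \<beta> (v \<circ> \<tau>)) / x_minus_y v) * (f v + f v) =
          \<alpha> v * f v + \<alpha> (v \<circ> \<tau>) * f v"
        unfolding \<beta>_def by (simp add: field_simps)
    qed
    show "regular (\<lambda>v. x_minus_y v * (\<alpha> v * f v - \<alpha> (v \<circ> \<tau>) * f v))"
      using diff
    proof (rule rational_on_cong)
      fix v assume "generic n v"
      show "1/2 * (\<beta> v + \<beta> (v \<circ> \<tau>)) * (f v + f v) =
          x_minus_y v * (\<alpha> v * f v - \<alpha> (v \<circ> \<tau>) * f v)"
        unfolding \<beta>_def by (simp add: field_simps)
    qed
  qed
qed

subsection \<open>The coefficients of the generators\<close>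

lemma pplus_comp_\<tau>: "pplus r (swap_col r s) (u \<circ> \<tau>) = pplus r s u"
proof -
  have "pplus r (swap_col r s) (u \<circ> \<tau>) = (\<Prod>t = 1..r + 1. u (r, s) - u (r + 1, swap_col (r + 1) t))"
    unfolding pplus_def by simp
  also have "\<dots> = pplus r s u"
    unfolding pplus_def by (rule prod.reindex_bij_betw[OF bij_betw_swap_col])
  finally show ?thesis .
qed

lemma pminus_comp_\<tau>: "pminus r (swap_col r s) (u \<circ> \<tau>) = pminus r s u"
proof -
  have "pminus r (swap_col r s) (u \<circ> \<tau>) = (\<Prod>t = 1..r - 1. u (r, s) - u (r - 1, swap_col (r - 1) t))"
    unfolding pminus_def by simp
  also have "\<dots> = pminus r s u"
    unfolding pminus_def by (rule prod.reindex_bij_betw[OF bij_betw_swap_col])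
  finally show ?thesis .
qed

lemma qq_comp_\<tau>:
  assumes "s \<in> {1..r}"
  shows "qq r (swap_col r s) (u \<circ> \<tau>) = qq r s u"
proof -
  have "qq r (swap_col r s) (u \<circ> \<tau>) = (\<Prod>t \<in> {1..r} - {swap_col r s}. u (r, s) - u (r, swap_col r t))"
    unfolding qq_def by simp
  also have "\<dots> = qq r s u"
    unfolding qq_def using prod.reindex_bij_betw[OF bij_betw_swap_col_remove[OF assms], symmetric,
      where g = "\<lambda>t. u (r, s) - u (r, swap_col r t)"] by simp
  finally show ?thesis .
qed

lemma rowsum_comp_\<tau>: "rowsum r (u \<circ> \<tau>) = rowsum r u"
  unfolding rowsum_def comp_apply \<tau>_pair by (rule sum.reindex_bij_betw[OF bij_betw_swap_col])

lemma ladder_coeff_comp_\<tau>: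
  assumes "\<And>u. P' (u \<circ> \<tau>) = P u" "s \<in> {1..r}"
  shows "ladder_coeff n P' r (swap_col r s) (z \<circ> \<tau>) v = ladder_coeff n P r s z (v \<circ> \<tau>)"
  unfolding ladder_coeff_def shift_comp_\<tau> assms(1) qq_comp_\<tau>[OF assms(2)] by simp

lemma regular_ladder_coeff:
  assumes r: "r < n" "s \<in> {1..r}" and P: "P \<in> polyfun n"
    and not_pole: "\<not> (r = k \<and> s \<in> {i, j} \<and> z (k, i) = z (k, j))"
  shows "regular (ladder_coeff n P r s z)"
proof -
  have "regular (\<lambda>v. P (shift v z) / qq r s (shift v z))"
  proof (rule rational_on_divide)
    show "regular (\<lambda>v. P (shift v z))" by (intro rational_on_polyfun polyfun_shift P)
    show "(\<lambda>v. qq r s (shift v z)) \<in> polyfun n" using r by (intro polyfun_shift polyfun_qq)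
    fix v assume v: "v \<in> regular_pts"
    have "v (r, s) - v (r, t) + of_int (z (r, s) - z (r, t)) \<noteq> 0" if "t \<in> {1..r} - {s}" for t
      using that r v not_pole i_less_j
      by (intro shifted_diff_nonzero) (auto simp: doubleton_eq_iff)
    then show "qq r s (shift v z) \<noteq> 0" unfolding qq_shift by (simp add: prod_zero_iff)
  qed
  then show ?thesis by (rule rational_on_cong) (simp add: ladder_coeff_def)
qed

text \<open>If \<open>z\<close> is \<open>\<tau>\<close>-fixed, then \<open>q\<^sub>k\<^sub>,\<^sub>i(\<lambda>\<^sup>z)\<close> and \<open>q\<^sub>k\<^sub>,\<^sub>j(\<lambda>\<^sup>z)\<close> contain the factor \<open>\<plusminus>(x - y)\<close>,
  and the rest of the coefficient is regular.\<close>

lemma regular_ladder_coeff_pole: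
  assumes s: "s \<in> {i, j}" and P: "P \<in> polyfun n" and z: "z (k, i) = z (k, j)"
  shows "regular (\<lambda>v. x_minus_y v * ladder_coeff n P k s z v)"
proof -
  define s' where "s' = (if s = i then j else i)"
  define \<epsilon> :: complex where "\<epsilon> = (if s = i then 1 else -1)"
  define R :: "pt \<Rightarrow> complex"
    where "R v = (\<Prod>t \<in> {1..k} - {i, j}. v (k, s) - v (k, t) + of_int (z (k, s) - z (k, t)))" for v
  have R_nonzero: "R v \<noteq> 0" if v: "v \<in> regular_pts" for v
  proof -
    have "v (k, s) - v (k, t) + of_int (z (k, s) - z (k, t)) \<noteq> 0" if "t \<in> {1..k} - {i, j}" for t
      using that v s i_pos i_less_j j_le_k k_less_n
      by (intro shifted_diff_nonzero) (auto simp: doubleton_eq_iff)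
    then show ?thesis unfolding R_def by (simp add: prod_zero_iff)
  qed
  have R: "R \<in> polyfun n"
    unfolding R_def[abs_def] using s i_pos i_less_j j_le_k k_less_n
    by (intro polyfun_prod polyfun.padd polyfun_coord_diff polyfun.pconst) (auto simp: pos_def)
  have "{1..k} - {s} = insert s' ({1..k} - {i, j})"
    using s i_pos i_less_j j_le_k unfolding s'_def by auto
  then have "qq k s (shift v z) = (v (k, s) - v (k, s') + of_int (z (k, s) - z (k, s'))) * R v" for v
    unfolding qq_shift R_def by (simp add: s'_def)
  then have qq: "qq k s (shift v z) = \<epsilon> * x_minus_y v * R v" for v
    using s z unfolding s'_def \<epsilon>_def by auto
  have "regular (\<lambda>v. \<epsilon> * (P (shift v z) / R v))"
    by (intro rational_on_cmult rational_on_divide[OF rational_on_polyfun[OF polyfun_shift[OF P]] R]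
        R_nonzero)
  then show ?thesis
  proof (rule rational_on_cong)
    fix v assume "generic n v"
    then show "\<epsilon> * (P (shift v z) / R v) = x_minus_y v * ladder_coeff n P k s z v"
      using x_minus_y_nonzero R_nonzero unfolding ladder_coeff_def qq \<epsilon>_def by auto
  qed
qed

lemma admissible_ladder_term:
  assumes r: "r < n" "s \<in> {1..r}" and P: "P \<in> polyfun n"
    and u: "admissible (u z) (u (z \<circ> \<tau>))"
  shows "admissible (\<lambda>v. ladder_coeff n P r s z v * u z v)
      (\<lambda>v. ladder_coeff n P r s z (v \<circ> \<tau>) * u (z \<circ> \<tau>) v)"
proof (cases "r = k \<and> s \<in> {i, j} \<and> z (k, i) = z (k, j)")
  case True
  then have "z \<circ> \<tau> = z" by (intro \<tau>_fixes) auto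
  with u admissible_mult_pole[OF _ regular_ladder_coeff_pole[OF _ P]] True show ?thesis
    by auto
next
  case False
  with r P show ?thesis by (intro admissible_mult u regular_ladder_coeff)
qed

subsection \<open>The intrinsic description of \<open>V\<^sub>\<B>\<close>\<close>

definition admissible_vecs :: "vec set" where
  "admissible_vecs = {u. finite {w. u w \<noteq> (\<lambda>v. 0)} \<and> (\<forall>w. w \<notin> Zvec0 n \<longrightarrow> u w = (\<lambda>v. 0)) \<and>
     (\<forall>w v. \<not> generic n v \<longrightarrow> u w v = 0) \<and> (\<forall>w. admissible (u w) (u (w \<circ> \<tau>)))}"

lemma admissible_vecsI:
  "finite {w. u w \<noteq> (\<lambda>v. 0)} \<Longrightarrow> (\<And>w. w \<notin> Zvec0 n \<Longrightarrow> u w = (\<lambda>v. 0)) \<Longrightarrow>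
   (\<And>w v. \<not> generic n v \<Longrightarrow> u w v = 0) \<Longrightarrow> (\<And>w. admissible (u w) (u (w \<circ> \<tau>))) \<Longrightarrow>
   u \<in> admissible_vecs"
  unfolding admissible_vecs_def by blast

lemma admissible_vecsD:
  assumes "u \<in> admissible_vecs"
  shows "finite {w. u w \<noteq> (\<lambda>v. 0)}" "w \<notin> Zvec0 n \<Longrightarrow> u w = (\<lambda>v. 0)"
    "\<not> generic n v \<Longrightarrow> u w v = 0" "admissible (u w) (u (w \<circ> \<tau>))"
  using assms unfolding admissible_vecs_def by auto

lemma admissible_vecs_cmult:
  assumes "u \<in> admissible_vecs"
  shows "(\<lambda>w v. c * u w v) \<in> admissible_vecs"
proof (rule admissible_vecsI)
  show "finite {w. (\<lambda>v. c * u w v) \<noteq> (\<lambda>v. 0)}"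
    by (rule finite_subset[OF _ admissible_vecsD(1)[OF assms]]) auto
qed (use admissible_vecsD[OF assms] in \<open>auto intro: admissible_cmult\<close>)

lemma ladder_admissible_vecs:
  assumes u: "u \<in> admissible_vecs" and r: "r < n"
    and P: "\<And>s. s \<in> {1..r} \<Longrightarrow> P s \<in> polyfun n"
    and P_\<tau>: "\<And>s u. P (swap_col r s) (u \<circ> \<tau>) = P s u"
    and \<sigma>_inj: "\<And>s. inj (\<sigma> s)"
    and \<sigma>_\<tau>: "\<And>s w. \<sigma> (swap_col r s) (w \<circ> \<tau>) = \<sigma> s w \<circ> \<tau>"
    and \<sigma>_Zvec0: "\<And>s w. s \<in> {1..r} \<Longrightarrow> \<sigma> s w \<in> Zvec0 n \<Longrightarrow> w \<in> Zvec0 n"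
  shows "ladder n r P \<sigma> u \<in> admissible_vecs"
proof (rule admissible_vecsI)
  have "ladder n r P \<sigma> u w = (\<lambda>v. 0)" if "\<forall>s\<in>{1..r}. u (\<sigma> s w) = (\<lambda>v. 0)" for w
    using that by (simp add: ladder_def fun_eq_iff)
  then have "{w. ladder n r P \<sigma> u w \<noteq> (\<lambda>v. 0)} \<subseteq> (\<Union>s\<in>{1..r}. \<sigma> s -` {w. u w \<noteq> (\<lambda>v. 0)})"
    by blast
  then show "finite {w. ladder n r P \<sigma> u w \<noteq> (\<lambda>v. 0)}"
    by (rule finite_subset)
      (use finite_vimageI[OF admissible_vecsD(1)[OF u] \<sigma>_inj] in \<open>auto simp: vimage_def\<close>)
  show "ladder n r P \<sigma> u w = (\<lambda>v. 0)" if "w \<notin> Zvec0 n" for w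
  proof -
    have "u (\<sigma> s w) = (\<lambda>v. 0)" if "s \<in> {1..r}" for s
      using that \<open>w \<notin> Zvec0 n\<close> \<sigma>_Zvec0 admissible_vecsD(2)[OF u] by blast
    then show ?thesis by (simp add: ladder_def fun_eq_iff)
  qed
  show "ladder n r P \<sigma> u w v = 0" if "\<not> generic n v" for w v
    using that by (simp add: ladder_def ladder_coeff_def)
  fix w
  have "ladder n r P \<sigma> u (w \<circ> \<tau>) v = (\<Sum>s = 1..r. ladder_coeff n (P s) r s (\<sigma> s w) (v \<circ> \<tau>) *
      u (\<sigma> s w \<circ> \<tau>) v)" for v
  proof -
    have "ladder n r P \<sigma> u (w \<circ> \<tau>) v = (\<Sum>s = 1..r. ladder_coeff n (P (swap_col r s)) r (swap_col r s)
        (\<sigma> (swap_col r s) (w \<circ> \<tau>)) v * u (\<sigma> (swap_col r s) (w \<circ> \<tau>)) v)"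
      unfolding ladder_def by (rule sum.reindex_bij_betw[OF bij_betw_swap_col, symmetric])
    then show ?thesis
      unfolding \<sigma>_\<tau> by (simp add: ladder_coeff_comp_\<tau> P_\<tau>)
  qed
  then show "admissible (ladder n r P \<sigma> u w) (ladder n r P \<sigma> u (w \<circ> \<tau>))"
    unfolding ladder_def
    by (simp only:) (intro admissible_sum admissible_ladder_term r P admissible_vecsD(4)[OF u]; simp)
qed

lemma Eup_admissible_vecs:
  assumes "u \<in> admissible_vecs" "r < n"
  shows "Eup n r u \<in> admissible_vecs"
  unfolding Eup_eq_ladder
  using assms polyfun_pplus pplus_comp_\<tau> inj_zsub zsub_comp_\<tau> Zvec0_zsub_delta_imp
  by (intro admissible_vecs_cmult ladder_admissible_vecs) auto

lemma Edown_admissible_vecs: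
  assumes "u \<in> admissible_vecs" "r < n"
  shows "Edown n r u \<in> admissible_vecs"
  unfolding Edown_eq_ladder
  using assms polyfun_pminus pminus_comp_\<tau> inj_zadd zadd_comp_\<tau> Zvec0_zadd_delta_imp
  by (intro ladder_admissible_vecs) auto

lemma Ediag_admissible_vecs:
  assumes u: "u \<in> admissible_vecs" and r: "r \<le> n"
  shows "Ediag n r u \<in> admissible_vecs"
proof (rule admissible_vecsI)
  show "finite {w. Ediag n r u w \<noteq> (\<lambda>v. 0)}"
    by (rule finite_subset[OF _ admissible_vecsD(1)[OF u]]) (auto simp: Ediag_def)
  fix w
  show "w \<notin> Zvec0 n \<Longrightarrow> Ediag n r u w = (\<lambda>v. 0)" "\<And>v. \<not> generic n v \<Longrightarrow> Ediag n r u w v = 0"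
    using admissible_vecsD(2,3)[OF u] by (simp_all add: Ediag_def)
  define \<alpha> where "\<alpha> v = rowsum r (shift v w) - rowsum (r - 1) (shift v w) + of_nat r - 1" for v
  have "regular \<alpha>"
    unfolding \<alpha>_def[abs_def] using r
    by (intro rational_on_polyfun polyfun_diff polyfun.padd polyfun.pconst polyfun_shift polyfun_rowsum)
      auto
  moreover have "Ediag n r u w = (\<lambda>v. \<alpha> v * u w v)"
    and "Ediag n r u (w \<circ> \<tau>) = (\<lambda>v. \<alpha> (v \<circ> \<tau>) * u (w \<circ> \<tau>) v)"
    unfolding \<alpha>_def Ediag_def shift_comp_\<tau> rowsum_comp_\<tau> by simp_all
  ultimately show "admissible (Ediag n r u w) (Ediag n r u (w \<circ> \<tau>))"
    using admissible_mult[OF admissible_vecsD(4)[OF u]] by simp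
qed

lemma SA_combination_eq:
  assumes "generic n v"
  shows "b * Svec n k i j z w v + c * Avec n k i j z w v =
    (if z = w then b / 2 + c / (2 * x_minus_y v) else 0) +
    (if z = w \<circ> \<tau> then b / 2 - c / (2 * x_minus_y v) else 0)"
  using assms x_minus_y_nonzero[OF assms]
  unfolding Svec_def Avec_def Tvec_def swapz_eq comp_\<tau>_eq_iff[of w z]
  by (cases "z = w"; cases "z = w \<circ> \<tau>") (simp_all add: add_divide_distrib diff_divide_distrib)

lemma SA_sum_eq:
  assumes "finite F" "generic n v"
  shows "(\<Sum>z\<in>F. b z v * Svec n k i j z w v + c z v * Avec n k i j z w v) =
    (if w \<in> F then b w v / 2 + c w v / (2 * x_minus_y v) else 0) +
    (if w \<circ> \<tau> \<in> F then b (w \<circ> \<tau>) v / 2 - c (w \<circ> \<tau>) v / (2 * x_minus_y v) else 0)"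
  unfolding SA_combination_eq[OF assms(2)] sum.distrib using assms(1) by (simp add: sum.delta)

lemma SA_sum_nongeneric:
  "\<not> generic n v \<Longrightarrow> (\<Sum>z\<in>F. b z v * Svec n k i j z w v + c z v * Avec n k i j z w v) = 0"
  by (simp add: Svec_def Avec_def Tvec_def)

lemma VB_subset_admissible_vecs: "VB n k i j \<subseteq> admissible_vecs"
proof
  fix u assume "u \<in> VB n k i j"
  then obtain F b c where F: "finite F" "F \<subseteq> Zvec0 n"
    and bc: "\<forall>z\<in>F. b z \<in> ringB n k i j \<and> c z \<in> ringB n k i j"
    and u: "u = (\<lambda>w v. \<Sum>z\<in>F. b z v * Svec n k i j z w v + c z v * Avec n k i j z w v)"
    unfolding VB_def by blast
  define \<beta> where "\<beta> z v = (if z \<in> F then b z v else 0)" for z v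
  define \<gamma> where "\<gamma> z v = (if z \<in> F then c z v else 0)" for z v
  have \<beta>: "regular (\<beta> z)" and \<gamma>: "regular (\<gamma> z)" for z
    using bc rational_on_const[of n _ 0] unfolding \<beta>_def \<gamma>_def ringB_iff by (cases "z \<in> F"; simp)+
  have u_generic: "u w v = \<beta> w v / 2 + \<gamma> w v / (2 * x_minus_y v) +
      (\<beta> (w \<circ> \<tau>) v / 2 - \<gamma> (w \<circ> \<tau>) v / (2 * x_minus_y v))" if "generic n v" for w v
    unfolding u SA_sum_eq[OF F(1) that] \<beta>_def \<gamma>_def by simp
  have u_nongeneric: "u w v = 0" if "\<not> generic n v" for w v
    unfolding u using SA_sum_nongeneric[OF that] by simp
  have u_zero: "u w = (\<lambda>v. 0)" if "w \<notin> F" "w \<circ> \<tau> \<notin> F" for w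
  proof
    fix v
    show "u w v = 0"
      by (cases "generic n v") (simp_all add: u_generic u_nongeneric that \<beta>_def \<gamma>_def)
  qed
  show "u \<in> admissible_vecs"
  proof (rule admissible_vecsI)
    have "{w. u w \<noteq> (\<lambda>v. 0)} \<subseteq> F \<union> (\<lambda>z. z \<circ> \<tau>) ` F"
      using u_zero by (force simp: image_iff comp_\<tau>_eq_iff)
    then show "finite {w. u w \<noteq> (\<lambda>v. 0)}" by (rule finite_subset) (use F(1) in simp)
    show "u w = (\<lambda>v. 0)" if "w \<notin> Zvec0 n" for w
      using that F(2) by (intro u_zero) auto
    show "u w v = 0" if "\<not> generic n v" for w v
      using that by (rule u_nongeneric)
    have sum_identity: "B + B' =
        (B / 2 + C / (2 * d) + (B' / 2 - C' / (2 * d))) + (B' / 2 + C' / (2 * d) + (B / 2 - C / (2 * d)))"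
      for B B' C C' d :: complex
      by (simp add: field_simps)
    have diff_identity: "C - C' =
        d * ((B / 2 + C / (2 * d) + (B' / 2 - C' / (2 * d))) - (B' / 2 + C' / (2 * d) + (B / 2 - C / (2 * d))))"
      if "d \<noteq> 0" for B B' C C' d :: complex
      using that by (simp add: field_simps)
    fix w
    show "admissible (u w) (u (w \<circ> \<tau>))"
      unfolding admissible_def
    proof
      show "regular (\<lambda>v. u w v + u (w \<circ> \<tau>) v)"
        using regular_add[OF \<beta>[of w] \<beta>[of "w \<circ> \<tau>"]]
      proof (rule rational_on_cong)
        fix v assume "generic n v"
        show "\<beta> w v + \<beta> (w \<circ> \<tau>) v = u w v + u (w \<circ> \<tau>) v"
          unfolding u_generic[OF \<open>generic n v\<close>] comp_\<tau>_\<tau> by (rule sum_identity)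
      qed
      show "regular (\<lambda>v. x_minus_y v * (u w v - u (w \<circ> \<tau>) v))"
        using regular_diff[OF \<gamma>[of w] \<gamma>[of "w \<circ> \<tau>"]]
      proof (rule rational_on_cong)
        fix v assume "generic n v"
        show "\<gamma> w v - \<gamma> (w \<circ> \<tau>) v = x_minus_y v * (u w v - u (w \<circ> \<tau>) v)"
          unfolding u_generic[OF \<open>generic n v\<close>] comp_\<tau>_\<tau>
          by (intro diff_identity x_minus_y_nonzero \<open>generic n v\<close>)
      qed
    qed
  qed
qed

lemma admissible_vecs_subset_VB: "admissible_vecs \<subseteq> VB n k i j"
proof
  fix u assume u: "u \<in> admissible_vecs"
  define F where "F = {w. u w \<noteq> (\<lambda>v. 0)} \<union> (\<lambda>z. z \<circ> \<tau>) ` {w. u w \<noteq> (\<lambda>v. 0)}"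
  define b where "b z v = (u z v + u (z \<circ> \<tau>) v) / 2" for z v
  define c where "c z v = x_minus_y v * (u z v - u (z \<circ> \<tau>) v) / 2" for z v
  have F: "finite F" "F \<subseteq> Zvec0 n"
    unfolding F_def using admissible_vecsD(1,2)[OF u] by (auto simp: Zvec0_comp_\<tau>)
  have F_\<tau>: "w \<circ> \<tau> \<in> F \<longleftrightarrow> w \<in> F" for w
    unfolding F_def by (auto simp: image_iff comp_\<tau>_eq_iff)
  have bc: "b z \<in> ringB n k i j \<and> c z \<in> ringB n k i j" for z
  proof -
    have S: "regular (\<lambda>v. u z v + u (z \<circ> \<tau>) v)"
      and D: "regular (\<lambda>v. x_minus_y v * (u z v - u (z \<circ> \<tau>) v))"
      using admissible_vecsD(4)[OF u] unfolding admissible_def by auto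
    have "regular (b z)"
      using rational_on_cmult[OF S, of "1/2"] by (rule rational_on_cong) (simp add: b_def)
    moreover have "regular (c z)"
      using rational_on_cmult[OF D, of "1/2"] by (rule rational_on_cong) (simp add: c_def)
    ultimately show ?thesis
      unfolding ringB_iff b_def c_def using admissible_vecsD(3)[OF u] by simp
  qed
  have coeff_identity: "a = (a + a') / 2 / 2 + d * (a - a') / 2 / (2 * d) +
      ((a' + a) / 2 / 2 - d * (a' - a) / 2 / (2 * d))" if "d \<noteq> 0" for a a' d :: complex
    using that by (simp add: field_simps)
  have "u w v = (\<Sum>z\<in>F. b z v * Svec n k i j z w v + c z v * Avec n k i j z w v)" for w v
  proof (cases "generic n v")
    case gen: True
    show ?thesis
    proof (cases "w \<in> F")
      case True
      show ?thesis
        unfolding SA_sum_eq[OF F(1) gen] F_\<tau> if_P[OF True]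
        unfolding b_def c_def comp_\<tau>_\<tau>
        by (rule coeff_identity[OF x_minus_y_nonzero[OF gen]])
    next
      case False
      then have "u w v = 0" unfolding F_def by auto
      with False show ?thesis unfolding SA_sum_eq[OF F(1) gen] F_\<tau> by simp
    qed
  qed (simp add: SA_sum_nongeneric admissible_vecsD(3)[OF u])
  then show "u \<in> VB n k i j"
    unfolding VB_def using F bc by (intro CollectI exI[of _ F] exI[of _ b] exI[of _ c]) auto
qed

lemma admissible_vecs_subset_VA: "admissible_vecs \<subseteq> VA n"
proof
  fix u assume u: "u \<in> admissible_vecs"
  have "u w \<in> ringA n" for w
  proof -
    have S: "regular (\<lambda>v. u w v + u (w \<circ> \<tau>) v)"
      and D: "regular (\<lambda>v. x_minus_y v * (u w v - u (w \<circ> \<tau>) v))"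
      using admissible_vecsD(4)[OF u] unfolding admissible_def by auto
    have "rational_on n (Collect (generic n))
        (\<lambda>v. x_minus_y v * (u w v - u (w \<circ> \<tau>) v) / x_minus_y v)"
      using rational_on_subset[OF D generic_subset_regular_pts] polyfun_coord_diff[OF ki_pos kj_pos]
        x_minus_y_nonzero by (rule rational_on_divide) simp
    from rational_on_cmult[OF rational_on_add[OF order_refl rational_on_subset[OF S generic_subset_regular_pts]
        this], of "1/2"]
    have "rational_on n (Collect (generic n)) (\<lambda>v. 1/2 * ((u w v + u (w \<circ> \<tau>) v) +
        x_minus_y v * (u w v - u (w \<circ> \<tau>) v) / x_minus_y v))" .
    then have "rational_on n (Collect (generic n)) (u w)"
    proof (rule rational_on_cong)
      fix v assume "generic n v"
      with x_minus_y_nonzero show "1/2 * ((u w v + u (w \<circ> \<tau>) v) +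
          x_minus_y v * (u w v - u (w \<circ> \<tau>) v) / x_minus_y v) = u w v"
        by simp
    qed
    then show ?thesis unfolding ringA_iff using admissible_vecsD(3)[OF u] by blast
  qed
  then show "u \<in> VA n" unfolding VA_def using admissible_vecsD(1,2)[OF u] by blast
qed

end

theorem mainTheorem3:
  fixes n k i j :: nat
  assumes "n \<ge> 2" and "1 \<le> i" and "i < j" and "j \<le> k" and "k < n"
  shows "VB n k i j \<subseteq> VA n \<and>
    (\<forall>u\<in>VB n k i j.
       (\<forall>r. 1 \<le> r \<and> r < n \<longrightarrow> Eup n r u \<in> VB n k i j \<and> Edown n r u \<in> VB n k i j) \<and>
       (\<forall>r. 1 \<le> r \<and> r \<le> n \<longrightarrow> Ediag n r u \<in> VB n k i j))"
proof -
  interpret critical_pair n k i j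
    using assms(2-5) by unfold_locales
  have VB_eq: "VB n k i j = admissible_vecs"
    using VB_subset_admissible_vecs admissible_vecs_subset_VB by blast
  show ?thesis
    unfolding VB_eq
    using admissible_vecs_subset_VA Eup_admissible_vecs Edown_admissible_vecs Ediag_admissible_vecs
    by blast
qed

end
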